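(* For every integer $k\geq 3$, the set of odd positive integers not in $\mathcal F(k)$ is nonempty and finite, and $\Gamma(k)\leq 3k-4$. Moreover, $\displaystyle\limsup_{k\to\infty}\frac{\Gamma(k)}{k}=3$.
   Context: The Thue–Morse word is $\mathbf t=\mathbf t_1\mathbf t_2\cdots$ where $\mathbf t_i\in\{0,1\}$ has the parity of the number of $1$'s in the binary expansion of $i-1$. For positive integers $\alpha\le\beta$, $\langle\alpha,\beta\rangle=\mathbf t_\alpha\cdots\mathbf t_\beta$. A $k$-anti-power is a word $w_1\cdots w_k$ with $w_1,\dots,w_k$ pairwise distinct words of equal length. $\mathcal F(k)$ is the set of odd positive integers $m$ such that $\langle 1,km\rangle$ is a $k$-anti-power. $\Gamma(k)=\sup\big((2\mathbb Z^+-1)\setminus\mathcal F(k)\big)$, the largest odd positive integer not in $\mathcal F(k)$. *)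

theory Defs
  imports "HOL-Analysis.Analysis"
begin

fun popcount :: "nat \<Rightarrow> nat" where
  "popcount n = (if n = 0 then 0 else n mod 2 + popcount (n div 2))"
declare popcount.simps[simp del]

text \<open>Thue--Morse word, 1-indexed: thue i is the letter t_i (for i \<ge> 1).\<close>
definition thue :: "nat \<Rightarrow> nat" where
  "thue i = popcount (i - 1) mod 2"

definition tm_factor :: "nat \<Rightarrow> nat \<Rightarrow> nat list" where
  "tm_factor a b = map thue [a..<b+1]"

definition anti_power :: "nat \<Rightarrow> 'a list \<Rightarrow> bool" where
  "anti_power k w \<longleftrightarrow> k > 0 \<and> length w mod k = 0 \<and>
     (let m = length w div k in
       \<forall>i<k. \<forall>j<k. i \<noteq> j \<longrightarrow> take m (drop (i*m) w) \<noteq> take m (drop (j*m) w))"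

definition FF :: "nat \<Rightarrow> nat set" where
  "FF k = {m. odd m \<and> anti_power k (tm_factor 1 (k*m))}"

definition Gamma :: "nat \<Rightarrow> nat" where
  "Gamma k = Sup ({m. odd m} - FF k)"

end

theory Submission
  imports Defs "HOL-Computational_Algebra.Factorial_Ring" "HOL-Real_Asymp.Real_Asymp"
begin

text \<open>Write \<open>tm n\<close> for the Thue--Morse letter at the 0-based position \<open>n\<close>, so that
  \<open>tm (2n) = tm n\<close> and \<open>tm (2n+1) = 1 - tm n\<close>. Consequently \<open>tm\<close> has no cube of a letter,
  any factor of length at least 4 determines the parity of its starting position, and by halving,
  a factor of length greater than \<open>3\<cdot>2\<^sup>s\<close> determines its position modulo \<open>2\<^sup>s\<^sup>+\<^sup>1\<close>.

  If the \<open>i\<close>-th and \<open>j\<close>-th blocks of length \<open>m\<close> coincide, where \<open>m\<close> is odd and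
  \<open>j - i = 2\<^sup>v c\<close> with \<open>c\<close> odd and \<open>3\<cdot>2\<^sup>v < m\<close>, then \<open>2\<^sup>v\<^sup>+\<^sup>1\<close> divides \<open>(j - i) m\<close>,
  which is absurd. For \<open>j - i < k\<close> and odd \<open>m > 3k - 4\<close> this inequality holds, giving \<open>\<Gamma>(k) \<le> 3k - 4\<close>.
  Conversely, for \<open>B = 2\<^sup>w\<close>, \<open>k = B\<^sup>2 + B + 2\<close> and \<open>m = 3B\<^sup>2 - B + 1\<close>, the blocks with
  indices \<open>B + 1\<close> and \<open>B\<^sup>2 + B + 1\<close> coincide, so \<open>\<Gamma>(k)/k \<rightarrow> 3\<close> along this subsequence.\<close>

definition tm :: "nat \<Rightarrow> nat" where
  "tm n = popcount n mod 2"

lemma popcount_0 [simp]: "popcount 0 = 0"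
  by (simp add: popcount.simps)

lemma popcount_Suc_0 [simp]: "popcount (Suc 0) = 1"
  by (simp add: popcount.simps)

lemma popcount_double_add: "e < 2 \<Longrightarrow> popcount (2 * n + e) = popcount n + e"
  by (subst popcount.simps) auto

lemma popcount_pow2_mult_add: "r < 2 ^ a \<Longrightarrow> popcount (2 ^ a * q + r) = popcount q + popcount r"
proof (induction a arbitrary: r)
  case 0
  then show ?case by simp
next
  case (Suc a)
  have "2 ^ Suc a * q + r = 2 * (2 ^ a * q + r div 2) + r mod 2"
    by simp
  then have "popcount (2 ^ Suc a * q + r) = popcount (2 ^ a * q + r div 2) + r mod 2"
    by (metis popcount_double_add mod_less_divisor zero_less_numeral)
  also have "\<dots> = popcount q + (popcount (r div 2) + r mod 2)"
    using Suc by simp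
  also have "popcount (r div 2) + r mod 2 = popcount r"
    using popcount_double_add[of "r mod 2" "r div 2"] by simp
  finally show ?case .
qed

lemma tm_pow2_mult_add: "r < 2 ^ a \<Longrightarrow> tm (2 ^ a * q + r) = (tm q + tm r) mod 2"
  unfolding tm_def by (simp add: popcount_pow2_mult_add mod_add_eq)

lemma tm_less_2: "tm n < 2"
  by (simp add: tm_def)

lemma tm_double_add: "e < 2 \<Longrightarrow> tm (2 * n + e) = (tm n + e) mod 2"
  using tm_pow2_mult_add[of e 1 n] by (auto simp: tm_def less_2_cases_iff)

lemma tm_double [simp]: "tm (2 * n) = tm n"
  using tm_double_add[of 0 n] tm_less_2[of n] by simp

lemma tm_double_Suc [simp]: "tm (Suc (2 * n)) = 1 - tm n"
  using tm_double_add[of 1 n] tm_less_2[of n] by simp presburger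

lemma tm_double_Suc_neq: "tm (Suc (2 * n)) \<noteq> tm (2 * n)"
  using tm_less_2[of n] by simp presburger

lemma tm_no_cube: "tm q = tm (q + 1) \<Longrightarrow> tm (q + 1) \<noteq> tm (q + 2)"
proof (cases "even q")
  case True
  then obtain p where "q = 2 * p" by blast
  then show "tm q = tm (q + 1) \<Longrightarrow> ?thesis" using tm_double_Suc_neq[of p] by simp
next
  case False
  then obtain p where "q + 1 = 2 * p"
    by (intro that[of "(q + 1) div 2"]) simp
  moreover have "q + 2 = Suc (2 * p)" using calculation by simp
  ultimately show ?thesis using tm_double_Suc_neq[of p] by simp
qed

lemma tm_window_even_odd: "\<exists>r<4. tm (2 * p + r) \<noteq> tm (2 * q + 1 + r)"
proof (rule ccontr)
  assume "\<not> ?thesis"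
  then have agree: "tm x = tm y" if "x = 2 * p + r" "y = 2 * q + 1 + r" "r < 4" for x y r
    using that by blast
  have "tm (2 * p) = tm (Suc (2 * q))" "tm (Suc (2 * p)) = tm (2 * (q + 1))"
    "tm (2 * (p + 1)) = tm (Suc (2 * (q + 1)))" "tm (Suc (2 * (p + 1))) = tm (2 * (q + 2))"
    by (rule agree[where r = 0] agree[where r = 1] agree[where r = 2] agree[where r = 3]; simp)+
  then have "tm p = 1 - tm q" "1 - tm p = tm (q + 1)"
    and "tm (p + 1) = 1 - tm (q + 1)" "1 - tm (p + 1) = tm (q + 2)"
    by (simp_all only: tm_double tm_double_Suc)
  then have "tm q = tm (q + 1)" "tm (q + 1) = tm (q + 2)"
    using tm_less_2[of p] tm_less_2[of q] tm_less_2[of "p + 1"] tm_less_2[of "q + 1"] by linarith+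
  then show False using tm_no_cube by blast
qed

lemma tm_window_mod_2:
  assumes agree: "\<forall>r<L. tm (a + r) = tm (b + r)" and "4 \<le> L"
  shows "a mod 2 = b mod 2"
proof (rule ccontr)
  have disagree: "\<exists>r<4. tm (a + r) \<noteq> tm (b + r)" if "even a" "odd b" for a b
    using tm_window_even_odd[of "a div 2" "b div 2"] that by simp
  assume "a mod 2 \<noteq> b mod 2"
  then consider "even a" "odd b" | "even b" "odd a"
    by (metis mod2_eq_if)
  then have "\<exists>r<4. tm (a + r) \<noteq> tm (b + r)"
    by cases (use disagree in \<open>blast, metis\<close>)
  then show False using agree \<open>4 \<le> L\<close> by fastforce
qed

lemma tm_window_mod_pow2:
  assumes "\<forall>r<L. tm (a + r) = tm (b + r)" and "3 * 2 ^ s < L"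
  shows "a mod 2 ^ (s + 1) = b mod 2 ^ (s + 1)"
  using assms
proof (induction s arbitrary: a b L)
  case 0
  then show ?case using tm_window_mod_2 by simp
next
  case (Suc s)
  have "2 \<le> (2::nat) ^ Suc s"
    by simp
  then have "4 \<le> L"
    using Suc.prems(2) by linarith
  then have parity: "a mod 2 = b mod 2"
    by (rule tm_window_mod_2[OF Suc.prems(1)])
  define e where "e = a mod 2"
  then have "e < 2"
    by simp
  have a: "a + 2 * r = 2 * (a div 2 + r) + e" and b: "b + 2 * r = 2 * (b div 2 + r) + e" for r
    using parity unfolding e_def by presburger+
  have "tm (a div 2 + r) = tm (b div 2 + r)" if "r < (L + 1) div 2" for r
  proof -
    have "tm (a + 2 * r) = tm (b + 2 * r)"
      using Suc.prems(1) that by simp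
    then have "tm (2 * (a div 2 + r) + e) = tm (2 * (b div 2 + r) + e)"
      by (simp only: a[symmetric] b[symmetric])
    then have "(tm (a div 2 + r) + e) mod 2 = (tm (b div 2 + r) + e) mod 2"
      by (simp only: tm_double_add[OF \<open>e < 2\<close>])
    then show ?thesis
      using tm_less_2[of "a div 2 + r"] tm_less_2[of "b div 2 + r"] by presburger
  qed
  moreover have "3 * 2 ^ s < (L + 1) div 2"
    using Suc.prems(2) by simp
  ultimately have "a div 2 mod 2 ^ (s + 1) = b div 2 mod 2 ^ (s + 1)"
    using Suc.IH by blast
  then show ?case
    using mod_mult2_eq[of a 2 "2 ^ (s + 1)"] mod_mult2_eq[of b 2 "2 ^ (s + 1)"] parity by simp
qed

lemma tm_factor_1_eq: "tm_factor 1 N = map tm [0..<N]"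
proof -
  have "[1..<N + 1] = map Suc [0..<N]"
    by (simp add: map_Suc_upt)
  then show ?thesis
    by (simp add: tm_factor_def thue_def tm_def comp_def)
qed

lemma take_drop_map_tm_block:
  assumes "i < k"
  shows "take m (drop (i * m) (map tm [0..<k * m])) = map tm [i * m..<i * m + m]"
proof -
  have "i * m + m \<le> k * m"
    using mult_le_mono1[of "Suc i" k m] assms by simp
  then show ?thesis
    by (simp add: take_map drop_map take_upt)
qed

lemma mem_FF_iff:
  assumes "0 < k"
  shows "m \<in> FF k \<longleftrightarrow> odd m \<and> (\<forall>i<k. \<forall>j<k. i \<noteq> j \<longrightarrow> (\<exists>r<m. tm (i * m + r) \<noteq> tm (j * m + r)))"
proof -
  have block_neq: "take m (drop (i * m) (map tm [0..<k * m])) \<noteq> take m (drop (j * m) (map tm [0..<k * m]))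
      \<longleftrightarrow> (\<exists>r<m. tm (i * m + r) \<noteq> tm (j * m + r))" if "i < k" "j < k" for i j
    using that by (simp add: take_drop_map_tm_block list_eq_iff_nth_eq)
  have "length (map tm [0..<k * m]) div k = m" "length (map tm [0..<k * m]) mod k = 0"
    using assms by simp_all
  then show ?thesis
    unfolding FF_def anti_power_def tm_factor_1_eq Let_def using assms block_neq by auto
qed

lemma tm_blocks_differ:
  assumes "i < j" and "odd m" and "3 * 2 ^ multiplicity 2 (j - i) < m"
  shows "\<exists>r<m. tm (i * m + r) \<noteq> tm (j * m + r)"
proof (rule ccontr)
  define v where "v = multiplicity 2 (j - i)"
  obtain c where c: "j - i = 2 ^ v * c" and "odd c"
    using multiplicity_decompose'[of "j - i" 2] assms(1) unfolding v_def by auto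
  assume "\<not> ?thesis"
  then have "i * m mod 2 ^ (v + 1) = j * m mod 2 ^ (v + 1)"
    using tm_window_mod_pow2[of m "i * m" "j * m" v] assms(3) unfolding v_def by auto
  moreover have "j * m - i * m = 2 ^ v * (c * m)"
    using c by (metis diff_mult_distrib mult.assoc)
  moreover have "i * m \<le> j * m"
    using assms(1) by simp
  ultimately have "2 ^ v * 2 dvd 2 ^ v * (c * m)"
    using mod_eq_dvd_iff_nat[of "i * m" "j * m"] by (metis power_Suc2 Suc_eq_plus1)
  then have "even (c * m)"
    using nat_mult_dvd_cancel1[of "2 ^ v" 2 "c * m"] by simp
  then show False
    using \<open>odd c\<close> assms(2) by simp
qed

lemma odd_notin_FF_le:
  assumes "3 \<le> k" and "odd m" and "m \<notin> FF k"
  shows "m \<le> 3 * k - 4"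
proof (rule ccontr)
  assume "\<not> m \<le> 3 * k - 4"
  then have m_ge: "3 * (k - 1) \<le> m" and "5 < m"
    using assms(1) by linarith+
  obtain i j where "i < k" "j < k" "i \<noteq> j" and "\<forall>r<m. tm (i * m + r) = tm (j * m + r)"
    using assms mem_FF_iff[of k m] by auto
  then obtain i j where "i < j" "j < k" and agree: "\<forall>r<m. tm (i * m + r) = tm (j * m + r)"
    by (metis linorder_neqE_nat)
  define v where "v = multiplicity 2 (j - i)"
  have "2 ^ v \<le> j - i"
    unfolding v_def using \<open>i < j\<close> by (intro dvd_imp_le multiplicity_dvd) simp
  then have "3 * 2 ^ v \<le> m"
    using \<open>j < k\<close> m_ge by linarith
  moreover have "3 * 2 ^ v \<noteq> m"
    using \<open>odd m\<close> \<open>5 < m\<close> by (cases v) auto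
  ultimately show False
    using tm_blocks_differ[OF \<open>i < j\<close> \<open>odd m\<close>] agree unfolding v_def by fastforce
qed

lemma one_notin_FF: "3 \<le> k \<Longrightarrow> 1 \<notin> FF k"
  using tm_double[of 1] mem_FF_iff[of k 1] by fastforce

lemma tm_2_to_5: "tm 2 = 1" "tm 3 = 0" "tm 4 = 1" "tm 5 = 0"
  using tm_double[of 1] tm_double_Suc[of 1] tm_double[of 2] tm_double_Suc[of 2] tm_double_Suc[of 0]
  by (simp_all add: tm_def)

lemma tm_family_window_eq:
  assumes "3 \<le> w" and B_def: "B = 2 ^ w" and "t < 3"
  shows "tm (3 * B + 2 + t) = tm (B * (3 * B + 2) + 3 + t)"
proof -
  have "8 \<le> B"
    unfolding B_def using power_increasing[OF assms(1), of "2::nat"] by simp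
  then have small: "2 < B" "2 + t < B" "3 + t < B"
    using assms(3) by linarith+
  have "tm (3 * B + 2 + t) = (tm 3 + tm (2 + t)) mod 2"
    using tm_pow2_mult_add[of "2 + t" w 3] small unfolding B_def by (simp add: mult.commute)
  moreover have "tm (B * (3 * B + 2) + 3 + t) = (tm 3 + tm 2 + tm (3 + t)) mod 2"
    using tm_pow2_mult_add[of "3 + t" w "3 * B + 2"] tm_pow2_mult_add[of 2 w 3] small
    unfolding B_def by (simp add: mult.commute add.assoc mod_add_left_eq)
  moreover have "t = 0 \<or> t = 1 \<or> t = 2"
    using assms(3) by linarith
  ultimately show ?thesis
    using tm_2_to_5 by (auto simp: numeral_eq_Suc)
qed

lemma tm_family_blocks_eq:
  assumes "3 \<le> w" and B_def: "B = 2 ^ w" and m_def: "m = 3 * B * B + 1 - B" and "r < m"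
  shows "tm ((B + 1) * m + r) = tm ((B * B + B + 1) * m + r)"
proof -
  define P where "P = B * B"
  have P: "P = 2 ^ (2 * w)"
    unfolding P_def B_def mult_2 power_add ..
  have m: "m + B = 3 * P + 1"
    unfolding m_def P_def mult.assoc
    by (rule le_add_diff_inverse2) (use le_square[of B] in linarith)
  have first_block: "(B + 1) * m = P * (3 * B + 2) + 1"
  proof -
    have "(B + 1) * (m + B) = (B + 1) * (3 * P + 1)"
      by (simp only: m)
    then show ?thesis
      unfolding P_def by (simp add: algebra_simps)
  qed
  have shift: "3 * B + 2 + t + m = B * (3 * B + 2) + 3 + t" for t
    using m unfolding P_def by (simp add: algebra_simps)
  txt \<open>Both positions end in the same \<open>2w\<close> binary digits \<open>r'\<close>; above them they differ
    as in \<open>tm_family_window_eq\<close>.\<close>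
  define t where "t = (r + 1) div P"
  define r' where "r' = (r + 1) mod P"
  have "2 \<le> B"
    unfolding B_def using power_increasing[of 1 w "2::nat"] assms(1) by simp
  moreover have "0 < P"
    unfolding P by simp
  ultimately have "t < 3" and "r' < 2 ^ (2 * w)"
    using m assms(4) unfolding t_def r'_def P by (simp_all add: div_less_iff_less_mult)
  have "r + 1 = P * t + r'"
    unfolding t_def r'_def by simp
  then have first: "(B + 1) * m + r = P * (3 * B + 2 + t) + r'"
    using first_block by (simp add: algebra_simps)
  have "(B * B + B + 1) * m + r = (B + 1) * m + r + P * m"
    unfolding P_def by (simp add: algebra_simps)
  also have "\<dots> = P * (3 * B + 2 + t + m) + r'"
    unfolding first by (simp add: algebra_simps)
  finally have second: "(B * B + B + 1) * m + r = P * (B * (3 * B + 2) + 3 + t) + r'"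
    unfolding shift .
  have "tm ((B * B + B + 1) * m + r) = (tm (B * (3 * B + 2) + 3 + t) + tm r') mod 2"
    unfolding second P by (rule tm_pow2_mult_add[OF \<open>r' < 2 ^ (2 * w)\<close>])
  moreover have "tm ((B + 1) * m + r) = (tm (3 * B + 2 + t) + tm r') mod 2"
    unfolding first P by (rule tm_pow2_mult_add[OF \<open>r' < 2 ^ (2 * w)\<close>])
  ultimately show ?thesis
    using tm_family_window_eq[OF assms(1) B_def \<open>t < 3\<close>] by simp
qed

lemma family_notin_FF:
  assumes "3 \<le> w" and "B = 2 ^ w"
  shows "odd (3 * B * B + 1 - B)" and "3 * B * B + 1 - B \<notin> FF (B * B + B + 2)"
proof -
  have "even B" and "B \<le> 3 * B * B"
    using assms by (simp_all add: le_square mult.assoc)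
  then have "(3 * B * B + 1 - B) + B = 3 * B * B + 1"
    by linarith
  with \<open>even B\<close> have "odd ((3 * B * B + 1 - B) + B)"
    by simp
  with \<open>even B\<close> show "odd (3 * B * B + 1 - B)"
    by simp
  define m where "m = 3 * B * B + 1 - B"
  define k where "k = B * B + B + 2"
  have "0 < B"
    using assms(2) by simp
  then have "B + 1 < k" "B * B + B + 1 < k" "B + 1 \<noteq> B * B + B + 1"
    unfolding k_def by simp_all
  moreover have "\<forall>r<m. tm ((B + 1) * m + r) = tm ((B * B + B + 1) * m + r)"
    using tm_family_blocks_eq[OF assms m_def] by blast
  ultimately show "m \<notin> FF k"
    using mem_FF_iff[of k m] by (metis zero_less_Suc k_def add_2_eq_Suc')
qed

lemma Gamma_le:
  assumes "3 \<le> k"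
  shows "Gamma k \<le> 3 * k - 4"
proof -
  have "1 \<in> {m. odd m} - FF k"
    using one_notin_FF assms by simp
  then have "{m. odd m} - FF k \<noteq> {}"
    by blast
  then show ?thesis
    unfolding Gamma_def by (rule cSup_least) (use assms odd_notin_FF_le in blast)
qed

lemma finite_odd_diff_FF: "3 \<le> k \<Longrightarrow> finite ({m. odd m} - FF k)"
  by (rule finite_subset[of _ "{..3 * k - 4}"]) (auto dest: odd_notin_FF_le)

lemma le_Gamma: "3 \<le> k \<Longrightarrow> odd m \<Longrightarrow> m \<notin> FF k \<Longrightarrow> m \<le> Gamma k"
  unfolding Gamma_def by (rule le_cSup_finite) (simp_all add: finite_odd_diff_FF)

lemma limsup_eq_of_le_and_subseq:
  fixes f l :: "nat \<Rightarrow> real"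
  assumes "eventually (\<lambda>k. f k \<le> c) sequentially" and "strict_mono s"
    and "\<And>n. l n \<le> f (s n)" and "l \<longlonglongrightarrow> c"
  shows "limsup (\<lambda>k. ereal (f k)) = ereal c"
proof (rule antisym)
  show "limsup (\<lambda>k. ereal (f k)) \<le> ereal c"
    using assms(1) by (intro Limsup_bounded) (simp add: eventually_mono)
  have "ereal c = liminf (\<lambda>n. ereal (l n))"
    using assms(4) by (intro lim_imp_Liminf[symmetric]) (simp_all add: tendsto_ereal)
  also have "\<dots> \<le> liminf (\<lambda>n. ereal (f (s n)))"
    using assms(3) by (intro Liminf_mono) simp
  also have "\<dots> \<le> limsup (\<lambda>n. ereal (f (s n)))"
    by (rule Liminf_le_Limsup) simp
  also have "\<dots> \<le> limsup (\<lambda>k. ereal (f k))"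
    using limsup_subseq_mono[OF assms(2), of "\<lambda>k. ereal (f k)"] by (simp add: comp_def)
  finally show "ereal c \<le> limsup (\<lambda>k. ereal (f k))" .
qed

lemma limsup_Gamma_div: "limsup (\<lambda>k. ereal (real (Gamma k) / real k)) = 3"
proof -
  define B :: "nat \<Rightarrow> nat" where "B n = 2 ^ (n + 3)" for n
  define s where "s n = B n * B n + B n + 2" for n
  define l :: "nat \<Rightarrow> real"
    where "l n = (3 * (2 ^ (n + 3))\<^sup>2 + 1 - 2 ^ (n + 3)) / ((2 ^ (n + 3))\<^sup>2 + 2 ^ (n + 3) + 2)" for n
  have "real (Gamma k) / real k \<le> 3" if "3 \<le> k" for k
  proof -
    have "real (Gamma k) \<le> 3 * real k"
      using Gamma_le[OF that] by linarith
    then show ?thesis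
      using that by (simp add: divide_le_eq)
  qed
  then have "eventually (\<lambda>k. real (Gamma k) / real k \<le> 3) sequentially"
    unfolding eventually_sequentially by blast
  moreover have "strict_mono s"
  proof (rule strict_monoI_Suc)
    fix n
    have "B n < B (Suc n)"
      unfolding B_def by simp
    then show "s n < s (Suc n)"
      unfolding s_def using mult_strict_mono[of "B n" "B (Suc n)" "B n" "B (Suc n)"] by simp
  qed
  moreover have "l n \<le> real (Gamma (s n)) / real (s n)" for n
  proof -
    have "B n \<le> 3 * B n * B n + 1"
      using le_square[of "B n"] by linarith
    then have "real (3 * B n * B n + 1 - B n) = 3 * real (B n) * real (B n) + 1 - real (B n)"
      unfolding of_nat_diff[OF \<open>B n \<le> 3 * B n * B n + 1\<close>] by simp
    moreover have "real (B n) = 2 ^ (n + 3)"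
      unfolding B_def by simp
    ultimately have "l n = real (3 * B n * B n + 1 - B n) / real (s n)"
      unfolding l_def s_def by (simp add: power2_eq_square algebra_simps)
    moreover have "3 * B n * B n + 1 - B n \<le> Gamma (s n)"
    proof (rule le_Gamma)
      have "0 < B n"
        unfolding B_def by simp
      then show "3 \<le> s n"
        unfolding s_def by simp
      show "odd (3 * B n * B n + 1 - B n)" "3 * B n * B n + 1 - B n \<notin> FF (s n)"
        using family_notin_FF[of "n + 3" "B n"] unfolding s_def B_def by simp_all
    qed
    ultimately show ?thesis
      by (simp add: divide_right_mono)
  qed
  moreover have "l \<longlonglongrightarrow> 3"
    unfolding l_def by real_asymp
  ultimately show ?thesis
    using limsup_eq_of_le_and_subseq[of "\<lambda>k. real (Gamma k) / real k" 3 s l] by simp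
qed

theorem theorem1:
  shows "(\<forall>k::nat. k \<ge> 3 \<longrightarrow>
            ({m. odd m} - FF k \<noteq> {} \<and> finite ({m. odd m} - FF k) \<and> Gamma k \<le> 3*k - 4))
         \<and> limsup (\<lambda>k. ereal (real (Gamma k) / real k)) = 3"
proof (intro conjI allI impI)
  fix k :: nat
  assume "3 \<le> k"
  then have "1 \<in> {m. odd m} - FF k"
    using one_notin_FF by simp
  then show "{m. odd m} - FF k \<noteq> {}"
    by blast
  show "finite ({m. odd m} - FF k)" and "Gamma k \<le> 3 * k - 4"
    using \<open>3 \<le> k\<close> by (rule finite_odd_diff_FF, rule Gamma_le)
qed (rule limsup_Gamma_div)

end
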